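(* Let $G=(V,E)$ be an $S$-regular graph with cells $V_1,\dots,V_k$, $n_i=|V_i|$, cell function $\tau$, and let $B\subseteq V$. Write $B_i=B\cap V_i$, $b_i=|B_i|/n_i$, and $N_{B_i}(v)$ for the set of neighbours of $v$ in $B_i$. Then \[\sum_{v\in V}\sum_{i=1}^k\Bigl(|N_{B_i}(v)|-b_is_{\tau(v)i}\Bigr)^2\le\lambda_B^2\sum_{i=1}^k b_i(1-b_i)n_i.\]
   Context: All graphs are simple, undirected and connected. $G$ is $S$-regular ($S=(s_{ij})$ a $k\times k$ nonnegative integer matrix) if $V$ is partitioned into nonempty cells $V_1,\dots,V_k$ such that every vertex of $V_i$ has exactly $s_{ij}$ neighbours in $V_j$; $\tau(v)=i$ for $v\in V_i$. Let $A$ be the adjacency matrix, $|V|=n>k$. The subspace $W=\mathrm{span}\{\mathbf{1}_{V_1},\dots,\mathbf{1}_{V_k}\}$ is $A$-invariant, with eigenvalues on $W$ equal to those of $S$; the eigenvalues of $A$ on $W^\perp$ are the bulk eigenvalues, and $\lambda_B$ is the largest absolute value of a bulk eigenvalue. *)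

theory Defs
  imports Complex_Main
begin

definition simple_graph :: "'v set \<Rightarrow> ('v \<Rightarrow> 'v \<Rightarrow> bool) \<Rightarrow> bool" where
  "simple_graph V E \<longleftrightarrow> finite V \<and> (\<forall>u v. E u v \<longrightarrow> u \<in> V \<and> v \<in> V)
     \<and> (\<forall>u v. E u v \<longrightarrow> E v u) \<and> (\<forall>v. \<not> E v v)"

definition connected_graph :: "'v set \<Rightarrow> ('v \<Rightarrow> 'v \<Rightarrow> bool) \<Rightarrow> bool" where
  "connected_graph V E \<longleftrightarrow> V \<noteq> {} \<and> (\<forall>u\<in>V. \<forall>v\<in>V. E\<^sup>*\<^sup>* u v)"

text \<open>Cell V_i (cells indexed by 0..<k).\<close>
definition cell :: "'v set \<Rightarrow> ('v \<Rightarrow> nat) \<Rightarrow> nat \<Rightarrow> 'v set" where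
  "cell V \<tau> i = {v \<in> V. \<tau> v = i}"

definition S_regular :: "'v set \<Rightarrow> ('v \<Rightarrow> 'v \<Rightarrow> bool) \<Rightarrow> nat \<Rightarrow> (nat \<Rightarrow> nat \<Rightarrow> nat) \<Rightarrow> ('v \<Rightarrow> nat) \<Rightarrow> bool" where
  "S_regular V E k S \<tau> \<longleftrightarrow> (\<forall>v\<in>V. \<tau> v < k) \<and> (\<forall>i<k. cell V \<tau> i \<noteq> {})
     \<and> (\<forall>v\<in>V. \<forall>j<k. card {u \<in> cell V \<tau> j. E v u} = S (\<tau> v) j)"

definition adj_apply :: "'v set \<Rightarrow> ('v \<Rightarrow> 'v \<Rightarrow> bool) \<Rightarrow> ('v \<Rightarrow> real) \<Rightarrow> 'v \<Rightarrow> real" where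
  "adj_apply V E x v = (\<Sum>u\<in>V. (if E v u then 1 else 0) * x u)"

text \<open>mu is a bulk eigenvalue: an eigenvalue of A restricted to W^perp, where
  W = span of the cell indicator vectors.\<close>
definition bulk_eigenvalue :: "'v set \<Rightarrow> ('v \<Rightarrow> 'v \<Rightarrow> bool) \<Rightarrow> nat \<Rightarrow> ('v \<Rightarrow> nat) \<Rightarrow> real \<Rightarrow> bool" where
  "bulk_eigenvalue V E k \<tau> \<mu> \<longleftrightarrow> (\<exists>x :: 'v \<Rightarrow> real.
      (\<forall>v. v \<notin> V \<longrightarrow> x v = 0) \<and> (\<exists>v\<in>V. x v \<noteq> 0)
      \<and> (\<forall>i<k. (\<Sum>v\<in>cell V \<tau> i. x v) = 0)
      \<and> (\<forall>v\<in>V. adj_apply V E x v = \<mu> * x v))"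

definition lambda_B :: "'v set \<Rightarrow> ('v \<Rightarrow> 'v \<Rightarrow> bool) \<Rightarrow> nat \<Rightarrow> ('v \<Rightarrow> nat) \<Rightarrow> real" where
  "lambda_B V E k \<tau> = Max {\<bar>\<mu>\<bar> | \<mu>. bulk_eigenvalue V E k \<tau> \<mu>}"

end

theory Submission
  imports Defs "HOL-Analysis.Function_Topology" "HOL-Library.Function_Algebras"
begin

(* Let W^perp be the space of functions on V whose sum over every cell vanishes. Since every vertex
   of V_j has s_ji neighbours in V_i, A maps W^perp into itself. On the compact unit sphere of W^perp,
   |Az|^2 attains its maximum M at some y; a first-variation argument gives A^2 y = M y, and then
   A y + sqrt M y or y is an eigenvector of A in W^perp for the eigenvalue sqrt M or -sqrt M.
   Hence |Ax|^2 <= lambda_B^2 |x|^2 on W^perp (eigenvectors for distinct eigenvalues are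
   orthogonal, so there are finitely many bulk eigenvalues and lambda_B is a true maximum).
   The theorem is this inequality summed over the vectors x_i = 1_{B_i} - b_i 1_{V_i} of W^perp,
   for which (A x_i)(v) = |N_{B_i}(v)| - b_i s_{tau(v) i} and |x_i|^2 = b_i (1 - b_i) n_i. *)

definition inner_on :: "'v set \<Rightarrow> ('v \<Rightarrow> real) \<Rightarrow> ('v \<Rightarrow> real) \<Rightarrow> real" where
  "inner_on V x y = (\<Sum>v\<in>V. x v * y v)"

lemma inner_on_commute: "inner_on V x y = inner_on V y x"
  unfolding inner_on_def by (simp add: mult.commute)

lemma inner_on_add_scaled_left:
  "inner_on V (\<lambda>v. x v + c * y v) z = inner_on V x z + c * inner_on V y z"
  unfolding inner_on_def by (simp add: sum.distrib sum_distrib_left algebra_simps)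

lemma inner_on_add_scaled_right:
  "inner_on V z (\<lambda>v. x v + c * y v) = inner_on V z x + c * inner_on V z y"
  using inner_on_add_scaled_left inner_on_commute by metis

lemma inner_on_self_add_scaled:
  "inner_on V (\<lambda>v. x v + t * y v) (\<lambda>v. x v + t * y v)
     = inner_on V x x + 2 * t * inner_on V x y + t\<^sup>2 * inner_on V y y"
  unfolding inner_on_add_scaled_left inner_on_add_scaled_right
  by (simp add: inner_on_commute[of V y x] algebra_simps power2_eq_square)

lemma inner_on_scaled: "inner_on V (\<lambda>v. c * x v) (\<lambda>v. c * y v) = c\<^sup>2 * inner_on V x y"
  unfolding inner_on_def by (simp add: sum_distrib_left algebra_simps power2_eq_square)

lemma inner_on_self_nonneg: "0 \<le> inner_on V x x"
  unfolding inner_on_def by (auto intro: sum_nonneg)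

lemma inner_on_self_eq_0_iff: "finite V \<Longrightarrow> inner_on V x x = 0 \<longleftrightarrow> (\<forall>v\<in>V. x v = 0)"
  unfolding inner_on_def by (simp add: sum_nonneg_eq_0_iff)

lemma continuous_on_inner_on [continuous_intros]:
  fixes f g :: "'a::topological_space \<Rightarrow> 'v \<Rightarrow> real"
  assumes "continuous_on S f" and "continuous_on S g"
  shows "continuous_on S (\<lambda>z. inner_on V (f z) (g z))"
proof -
  have "continuous_on S (\<lambda>z. f z v)" "continuous_on S (\<lambda>z. g z v)" for v
    using assms by (auto intro: continuous_on_product_then_coordinatewise)
  then show ?thesis
    unfolding inner_on_def by (intro continuous_on_sum continuous_on_mult)
qed

lemma sum_fun_apply: "sum f A x = (\<Sum>a\<in>A. f a x)"
  by (induction A rule: infinite_finite_induct) auto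

interpretation real_fun: vector_space "\<lambda>(c::real) (f::'a \<Rightarrow> real) v. c * f v"
  by unfold_locales (auto simp: fun_eq_iff algebra_simps)

lemma orthogonal_family_finite_card_le:
  assumes "finite V"
    and supp: "\<And>x v. x \<in> F \<Longrightarrow> v \<notin> V \<Longrightarrow> x v = 0"
    and nonzero: "\<And>x. x \<in> F \<Longrightarrow> x \<noteq> 0"
    and orth: "\<And>x y. x \<in> F \<Longrightarrow> y \<in> F \<Longrightarrow> x \<noteq> y \<Longrightarrow> inner_on V x y = 0"
  shows "finite F \<and> card F \<le> card V"
proof -
  let ?\<delta> = "\<lambda>w u. if u = w then 1 else 0 :: real"
  have pos: "inner_on V x x \<noteq> 0" if "x \<in> F" for x
    using nonzero[OF that] supp[OF that] \<open>finite V\<close> by (auto simp: inner_on_self_eq_0_iff fun_eq_iff)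
  have "real_fun.independent F"
    unfolding real_fun.independent_explicit_finite_subsets
  proof (intro allI impI ballI)
    fix T u x
    assume T: "T \<subseteq> F" "finite T" and sum0: "(\<Sum>y\<in>T. (\<lambda>v. u y * y v)) = 0" and "x \<in> T"
    have "0 = inner_on V (\<Sum>y\<in>T. (\<lambda>v. u y * y v)) x"
      by (simp add: sum0 inner_on_def)
    also have "\<dots> = (\<Sum>y\<in>T. u y * inner_on V y x)"
      unfolding inner_on_def sum_distrib_left sum_distrib_right sum_fun_apply
      using sum.swap by (simp add: mult.assoc)
    also have "\<dots> = u x * inner_on V x x"
      using T \<open>x \<in> T\<close> orth by (subst sum.remove) (auto intro!: sum.neutral, blast)
    finally show "u x = 0" using pos \<open>x \<in> T\<close> T by auto
  qed
  moreover have "F \<subseteq> real_fun.span (?\<delta> ` V)"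
  proof
    fix x assume "x \<in> F"
    have "x = (\<Sum>w\<in>V. (\<lambda>u. x w * ?\<delta> w u))"
      using supp[OF \<open>x \<in> F\<close>] \<open>finite V\<close>
      by (auto simp: fun_eq_iff sum_fun_apply if_distrib[of "(*) (x _)"] sum.delta cong: if_cong)
    also have "\<dots> \<in> real_fun.span (?\<delta> ` V)"
      by (intro real_fun.span_sum real_fun.span_scale real_fun.span_base) auto
    finally show "x \<in> real_fun.span (?\<delta> ` V)" .
  qed
  ultimately have "finite F \<and> card F \<le> card (?\<delta> ` V)"
    using real_fun.independent_span_bound \<open>finite V\<close> by blast
  then show ?thesis using card_image_le[OF \<open>finite V\<close>, of ?\<delta>] by linarith
qed

lemma linear_coeff_nonpos_if_quadratic_nonpos:
  fixes a c :: real
  assumes "\<And>t. t > 0 \<Longrightarrow> a * t + c * t\<^sup>2 \<le> 0"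
  shows "a \<le> 0"
proof (rule ccontr)
  assume "\<not> a \<le> 0"
  define t where "t = a / (\<bar>c\<bar> + 1)"
  have "t > 0" using \<open>\<not> a \<le> 0\<close> by (simp add: t_def)
  have "t * (a + c * t) \<le> 0"
    using assms[OF \<open>t > 0\<close>] by (simp add: algebra_simps power2_eq_square)
  then have "a + c * t \<le> 0"
    using \<open>t > 0\<close> by (simp add: mult_le_0_iff)
  moreover have "t * \<bar>c\<bar> < a"
    using \<open>\<not> a \<le> 0\<close> by (simp add: t_def field_simps)
  moreover have "- (t * \<bar>c\<bar>) \<le> c * t"
    using mult_right_mono[of "- \<bar>c\<bar>" c t] \<open>t > 0\<close> by (simp add: mult.commute)
  ultimately show False by linarith
qed

locale symmetric_invariant_subspace =
  fixes V :: "'v set" and A :: "('v \<Rightarrow> real) \<Rightarrow> 'v \<Rightarrow> real" and U :: "('v \<Rightarrow> real) set"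
  assumes finite_V: "finite V"
    and closed_U: "closed U"
    and U_supported: "x \<in> U \<Longrightarrow> v \<notin> V \<Longrightarrow> x v = 0"
    and U_add_scaled: "x \<in> U \<Longrightarrow> y \<in> U \<Longrightarrow> (\<lambda>v. x v + c * y v) \<in> U"
    and A_U: "x \<in> U \<Longrightarrow> A x \<in> U"
    and A_add_scaled: "x \<in> U \<Longrightarrow> y \<in> U \<Longrightarrow> A (\<lambda>v. x v + c * y v) = (\<lambda>v. A x v + c * A y v)"
    and A_symmetric: "x \<in> U \<Longrightarrow> y \<in> U \<Longrightarrow> inner_on V (A x) y = inner_on V x (A y)"
    and A_continuous: "continuous_on U A"
begin

definition eigenvalues :: "real set" where
  "eigenvalues = {\<mu>. \<exists>x\<in>U. x \<noteq> 0 \<and> A x = (\<lambda>v. \<mu> * x v)}"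

lemma U_scaled: "x \<in> U \<Longrightarrow> (\<lambda>v. c * x v) \<in> U"
  using U_add_scaled[of x x "c - 1"] by (simp add: algebra_simps)

lemma A_scaled: "x \<in> U \<Longrightarrow> A (\<lambda>v. c * x v) = (\<lambda>v. c * A x v)"
  using A_add_scaled[of x x "c - 1"] by (simp add: algebra_simps)

lemma U_inner_on_self_eq_0_iff: "x \<in> U \<Longrightarrow> inner_on V x x = 0 \<longleftrightarrow> x = 0"
  using finite_V U_supported by (auto simp: inner_on_self_eq_0_iff fun_eq_iff)

lemma finite_eigenvalues: "finite eigenvalues"
proof -
  let ?L = eigenvalues
  define e where "e \<mu> = (SOME x. x \<in> U \<and> x \<noteq> 0 \<and> A x = (\<lambda>v. \<mu> * x v))" for \<mu>
  have e: "e \<mu> \<in> U \<and> e \<mu> \<noteq> 0 \<and> A (e \<mu>) = (\<lambda>v. \<mu> * e \<mu> v)" if "\<mu> \<in> ?L" for \<mu>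
  proof -
    have "\<exists>x. x \<in> U \<and> x \<noteq> 0 \<and> A x = (\<lambda>v. \<mu> * x v)"
      using that unfolding eigenvalues_def mem_Collect_eq Bex_def .
    then show ?thesis unfolding e_def by (rule someI_ex)
  qed
  have orth: "inner_on V (e \<mu>) (e \<nu>) = 0" if "\<mu> \<in> ?L" "\<nu> \<in> ?L" "\<mu> \<noteq> \<nu>" for \<mu> \<nu>
  proof -
    have "\<mu> * inner_on V (e \<mu>) (e \<nu>) = inner_on V (A (e \<mu>)) (e \<nu>)"
      using e[OF that(1)] by (simp add: inner_on_def sum_distrib_left mult.assoc)
    also have "\<dots> = inner_on V (e \<mu>) (A (e \<nu>))"
      using e that A_symmetric by blast
    also have "\<dots> = \<nu> * inner_on V (e \<mu>) (e \<nu>)"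
      using e[OF that(2)] by (simp add: inner_on_def sum_distrib_left mult.left_commute)
    finally show ?thesis using that(3) by simp
  qed
  have "inj_on e ?L"
  proof (rule inj_onI)
    fix \<mu> \<nu> assume \<mu>: "\<mu> \<in> ?L" and \<nu>: "\<nu> \<in> ?L" and "e \<mu> = e \<nu>"
    show "\<mu> = \<nu>"
    proof (rule ccontr)
      assume "\<mu> \<noteq> \<nu>"
      with orth[OF \<mu> \<nu>] \<open>e \<mu> = e \<nu>\<close> have "inner_on V (e \<mu>) (e \<mu>) = 0" by simp
      with e[OF \<mu>] U_inner_on_self_eq_0_iff show False by blast
    qed
  qed
  moreover have "finite (e ` ?L) \<and> card (e ` ?L) \<le> card V"
  proof (rule orthogonal_family_finite_card_le[OF finite_V])
    show "x v = 0" if "x \<in> e ` ?L" "v \<notin> V" for x v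
      using that e U_supported by fast
    show "x \<noteq> 0" if "x \<in> e ` ?L" for x
      using that e by fast
    show "inner_on V x y = 0" if "x \<in> e ` ?L" "y \<in> e ` ?L" "x \<noteq> y" for x y
      using that orth by fast
  qed
  ultimately show ?thesis using finite_imageD by blast
qed

lemma compact_unit_sphere: "compact {x \<in> U. inner_on V x x = 1}"
proof -
  define box where "box = PiE UNIV (\<lambda>v. if v \<in> V then {-1..1} else {0::real})"
  have "compactin (product_topology (\<lambda>_. euclidean) UNIV) box"
    unfolding box_def compactin_PiE by auto
  then have "compact box"
    by (simp add: euclidean_product_topology)
  moreover have "closed {x \<in> U. inner_on V x x = 1}"
  proof -
    have "closed {x. inner_on V x x = 1}"
      by (intro closed_Collect_eq continuous_on_inner_on continuous_on_id continuous_on_const)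
    then have "closed (U \<inter> {x. inner_on V x x = 1})"
      using closed_U by (rule closed_Int[rotated])
    then show ?thesis by (simp add: Collect_conj_eq)
  qed
  moreover have "{x \<in> U. inner_on V x x = 1} \<subseteq> box"
  proof
    fix x assume x: "x \<in> {x \<in> U. inner_on V x x = 1}"
    have "x v \<in> {-1..1}" if "v \<in> V" for v
    proof -
      have "(x v)\<^sup>2 \<le> inner_on V x x"
        unfolding inner_on_def power2_eq_square using that finite_V
        by (intro member_le_sum) auto
      then have "(x v)\<^sup>2 \<le> 1" using x by simp
      then show ?thesis by (simp add: abs_square_le_1 abs_le_iff)
    qed
    then show "x \<in> box"
      using x U_supported by (simp add: box_def PiE_iff)
  qed
  ultimately show ?thesis
    by (metis compact_Int_closed Int_absorb1)
qed

lemma A_zero: "0 \<in> U \<Longrightarrow> A 0 = 0"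
  using A_scaled[of 0 0] by (simp add: zero_fun_def)

lemma operator_norm_attained:
  assumes "x \<in> U" and "x \<noteq> 0"
  obtains y where "y \<in> U" and "inner_on V y y = 1"
    and "\<And>z. z \<in> U \<Longrightarrow> inner_on V (A z) (A z) \<le> inner_on V (A y) (A y) * inner_on V z z"
proof -
  let ?S = "{x \<in> U. inner_on V x x = 1}"
  have normalize: "(\<lambda>v. c * z v) \<in> ?S" if "z \<in> U" "z \<noteq> 0" "c = 1 / sqrt (inner_on V z z)" for z c
  proof -
    have "inner_on V z z > 0"
      using that inner_on_self_nonneg[of V z] U_inner_on_self_eq_0_iff by force
    then have "inner_on V (\<lambda>v. c * z v) (\<lambda>v. c * z v) = 1"
      unfolding inner_on_scaled that(3) power_divide by simp
    then show ?thesis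
      using U_scaled[OF that(1)] by simp
  qed
  have "continuous_on ?S A"
    by (rule continuous_on_subset[OF A_continuous]) blast
  then have "continuous_on ?S (\<lambda>z. inner_on V (A z) (A z))"
    by (intro continuous_on_inner_on)
  moreover have "?S \<noteq> {}"
    using normalize[OF assms refl] by blast
  ultimately obtain y where y: "y \<in> ?S"
    and y_max: "\<And>z. z \<in> ?S \<Longrightarrow> inner_on V (A z) (A z) \<le> inner_on V (A y) (A y)"
    using continuous_attains_sup[OF compact_unit_sphere] by blast
  have "inner_on V (A z) (A z) \<le> inner_on V (A y) (A y) * inner_on V z z" if "z \<in> U" for z
  proof (cases "z = 0")
    case True
    then show ?thesis using A_zero that by (simp add: inner_on_def)
  next
    case False
    define c where "c = 1 / sqrt (inner_on V z z)"
    have unit: "c\<^sup>2 * inner_on V z z = 1"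
      using normalize[OF that False c_def] by (simp add: inner_on_scaled)
    have "inner_on V (A z) (A z) = c\<^sup>2 * inner_on V (A z) (A z) * inner_on V z z"
      using unit by (simp add: mult.commute mult.left_commute)
    also have "\<dots> \<le> inner_on V (A y) (A y) * inner_on V z z"
      using y_max[OF normalize[OF that False c_def]] A_scaled[OF that]
      by (intro mult_right_mono inner_on_self_nonneg) (simp add: inner_on_scaled)
    finally show ?thesis .
  qed
  then show ?thesis using that y by blast
qed

lemma maximizer_is_eigenvector_of_square:
  assumes y: "y \<in> U"
    and bound: "\<And>z. z \<in> U \<Longrightarrow> inner_on V (A z) (A z) \<le> M * inner_on V z z"
    and attained: "inner_on V (A y) (A y) = M * inner_on V y y"
  shows "A (A y) = (\<lambda>v. M * y v)"
proof -
  define w where "w = (\<lambda>v. A (A y) v + (- M) * y v)"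
  have Ay: "A y \<in> U" and w: "w \<in> U"
    using y A_U U_add_scaled unfolding w_def by blast+
  have Ay_Aw: "inner_on V (A y) (A w) = inner_on V w w + M * inner_on V y w"
  proof -
    have "inner_on V (A y) (A w) = inner_on V (A (A y)) w"
      using A_symmetric[OF Ay w] by simp
    also have "\<dots> = inner_on V w w + M * inner_on V y w"
      unfolding w_def inner_on_add_scaled_left by simp
    finally show ?thesis .
  qed
  \<comment> \<open>the bound at y + t w, expanded in t: its linear term is 2 t |w|^2\<close>
  have "2 * inner_on V w w * t + (inner_on V (A w) (A w) - M * inner_on V w w) * t\<^sup>2 \<le> 0"
    if "t > 0" for t
  proof -
    have "(\<lambda>v. y v + t * w v) \<in> U" using U_add_scaled[OF y w] .
    from bound[OF this] show ?thesis
      unfolding A_add_scaled[OF y w] inner_on_self_add_scaled Ay_Aw attained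
      by (simp add: algebra_simps power2_eq_square)
  qed
  then have "inner_on V w w \<le> 0"
    using linear_coeff_nonpos_if_quadratic_nonpos by fastforce
  then have "w = 0"
    using inner_on_self_nonneg[of V w] U_inner_on_self_eq_0_iff[OF w] by simp
  then show ?thesis
    by (simp add: w_def fun_eq_iff)
qed

lemma eigenvalue_of_square_eigenvector:
  assumes y: "y \<in> U" "y \<noteq> 0" and square: "A (A y) = (\<lambda>v. s\<^sup>2 * y v)"
  obtains \<mu> where "\<mu> \<in> eigenvalues" and "\<mu>\<^sup>2 = s\<^sup>2"
proof (cases "(\<lambda>v. A y v + s * y v) = 0")
  case True
  then have "A y = (\<lambda>v. - s * y v)"
    by (simp add: fun_eq_iff add_eq_0_iff)
  then have "- s \<in> eigenvalues"
    using y unfolding eigenvalues_def by blast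
  then show ?thesis using that by simp
next
  case False
  \<comment> \<open>A y + s y is an eigenvector for s, since A (A y) = s^2 y\<close>
  have z: "(\<lambda>v. A y v + s * y v) \<in> U"
    using U_add_scaled[OF A_U[OF y(1)] y(1)] .
  have "A (\<lambda>v. A y v + s * y v) = (\<lambda>v. s * (A y v + s * y v))"
    unfolding A_add_scaled[OF A_U[OF y(1)] y(1)] square
    by (simp add: fun_eq_iff algebra_simps power2_eq_square)
  then have "s \<in> eigenvalues"
    using z False unfolding eigenvalues_def by blast
  then show ?thesis using that by simp
qed

lemma norm_le_max_eigenvalue:
  assumes x: "x \<in> U"
  shows "inner_on V (A x) (A x) \<le> (Max (abs ` eigenvalues))\<^sup>2 * inner_on V x x"
proof (cases "x = 0")
  case True
  then show ?thesis using A_zero x by (simp add: inner_on_def)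
next
  case False
  obtain y where y: "y \<in> U" "inner_on V y y = 1"
    and bound: "\<And>z. z \<in> U \<Longrightarrow> inner_on V (A z) (A z) \<le> inner_on V (A y) (A y) * inner_on V z z"
    using operator_norm_attained[OF x False] by blast
  define s where "s = sqrt (inner_on V (A y) (A y))"
  have s2: "s\<^sup>2 = inner_on V (A y) (A y)"
    unfolding s_def by (simp add: inner_on_self_nonneg)
  have "A (A y) = (\<lambda>v. s\<^sup>2 * y v)"
    unfolding s2 using y bound by (intro maximizer_is_eigenvector_of_square) auto
  moreover have "y \<noteq> 0"
    using y(2) by (auto simp: inner_on_def)
  ultimately obtain \<mu> where \<mu>: "\<mu> \<in> eigenvalues" "\<mu>\<^sup>2 = s\<^sup>2"
    using eigenvalue_of_square_eigenvector y(1) by blast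
  have "\<bar>\<mu>\<bar> \<le> Max (abs ` eigenvalues)"
    using \<mu>(1) finite_eigenvalues by simp
  then have "s\<^sup>2 \<le> (Max (abs ` eigenvalues))\<^sup>2"
    using \<mu>(2) by (metis abs_ge_zero power2_abs power_mono)
  have "inner_on V (A x) (A x) \<le> s\<^sup>2 * inner_on V x x"
    using bound[OF x] s2 by simp
  also have "\<dots> \<le> (Max (abs ` eigenvalues))\<^sup>2 * inner_on V x x"
    using \<open>s\<^sup>2 \<le> _\<close> inner_on_self_nonneg by (rule mult_right_mono)
  finally show ?thesis .
qed

end

(* W^perp, with its elements extended by 0 outside V *)
definition bulk_space :: "'v set \<Rightarrow> nat \<Rightarrow> ('v \<Rightarrow> nat) \<Rightarrow> ('v \<Rightarrow> real) set" where
  "bulk_space V k \<tau> = {x. (\<forall>v. v \<notin> V \<longrightarrow> x v = 0) \<and> (\<forall>i<k. (\<Sum>v\<in>cell V \<tau> i. x v) = 0)}"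

lemma closed_bulk_space:
  fixes V :: "'v set"
  shows "closed (bulk_space V k \<tau>)"
proof -
  have coord: "continuous_on UNIV (\<lambda>x::'v \<Rightarrow> real. x v)" for v
    by simp
  have "closed {x::'v \<Rightarrow> real. v \<notin> V \<longrightarrow> x v = 0}" for v
    by (intro closed_Collect_imp closed_Collect_eq coord continuous_on_const) auto
  moreover have "closed {x::'v \<Rightarrow> real. i < k \<longrightarrow> (\<Sum>v\<in>cell V \<tau> i. x v) = 0}" for i
    by (intro closed_Collect_imp closed_Collect_eq continuous_on_sum coord continuous_on_const) auto
  ultimately show ?thesis
    unfolding bulk_space_def by (intro closed_Collect_conj closed_Collect_all)
qed

lemma adj_apply_outside: "simple_graph V E \<Longrightarrow> v \<notin> V \<Longrightarrow> adj_apply V E x v = 0"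
  unfolding adj_apply_def simple_graph_def by (force intro!: sum.neutral)

lemma adj_apply_add_scaled:
  "adj_apply V E (\<lambda>v. x v + c * y v) = (\<lambda>v. adj_apply V E x v + c * adj_apply V E y v)"
  unfolding adj_apply_def by (simp add: fun_eq_iff algebra_simps sum.distrib sum_distrib_left)

lemma continuous_on_adj_apply:
  fixes V :: "'v set"
  shows "continuous_on S (adj_apply V E)"
proof (rule continuous_on_coordinatewise_then_product)
  fix v
  have "continuous_on S (\<lambda>x::'v \<Rightarrow> real. x u)" for u
    by (rule continuous_on_product_then_coordinatewise[OF continuous_on_id])
  then show "continuous_on S (\<lambda>x. adj_apply V E x v)"
    unfolding adj_apply_def by (intro continuous_on_sum continuous_on_mult continuous_on_const)
qed

lemma inner_on_adj_apply_commute: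
  assumes "simple_graph V E"
  shows "inner_on V (adj_apply V E x) y = inner_on V x (adj_apply V E y)"
proof -
  have sym: "E u v \<longleftrightarrow> E v u" for u v
    using assms by (auto simp: simple_graph_def)
  have "inner_on V (adj_apply V E x) y = (\<Sum>v\<in>V. \<Sum>u\<in>V. (if E v u then 1 else 0) * x u * y v)"
    unfolding inner_on_def adj_apply_def by (simp add: sum_distrib_right)
  also have "\<dots> = (\<Sum>u\<in>V. \<Sum>v\<in>V. (if E u v then 1 else 0) * x u * y v)"
    by (subst sum.swap) (simp add: sym)
  also have "\<dots> = inner_on V x (adj_apply V E y)"
    unfolding inner_on_def adj_apply_def by (simp add: sum_distrib_left mult.commute mult.left_commute)
  finally show ?thesis .
qed

lemma sum_over_cells:
  assumes "finite V" and "\<forall>v\<in>V. \<tau> v < k"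
  shows "(\<Sum>u\<in>V. f u) = (\<Sum>j<k. \<Sum>u\<in>cell V \<tau> j. f u)"
  unfolding cell_def using assms by (intro sum.group[symmetric]) auto

lemma sum_cell_adj_apply:
  assumes "simple_graph V E" and "S_regular V E k S \<tau>" and "i < k"
  shows "(\<Sum>v\<in>cell V \<tau> i. adj_apply V E x v) = (\<Sum>j<k. real (S j i) * (\<Sum>u\<in>cell V \<tau> j. x u))"
proof -
  have fin: "finite V" and sym: "E u v \<longleftrightarrow> E v u" for u v
    using assms(1) by (auto simp: simple_graph_def)
  have fin_cell: "finite (cell V \<tau> i)"
    using fin by (simp add: cell_def)
  have "(\<Sum>v\<in>cell V \<tau> i. adj_apply V E x v) = (\<Sum>u\<in>V. x u * (\<Sum>v\<in>cell V \<tau> i. if E u v then 1 else 0))"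
    unfolding adj_apply_def by (subst sum.swap) (simp add: sum_distrib_left sym mult.commute)
  also have "\<dots> = (\<Sum>u\<in>V. x u * real (S (\<tau> u) i))"
    using assms(2,3) fin_cell by (intro sum.cong refl) (simp add: S_regular_def sum.If_cases Int_def)
  also have "\<dots> = (\<Sum>j<k. \<Sum>u\<in>cell V \<tau> j. x u * real (S (\<tau> u) i))"
    using fin assms(2) by (intro sum_over_cells) (simp_all add: S_regular_def)
  also have "\<dots> = (\<Sum>j<k. real (S j i) * (\<Sum>u\<in>cell V \<tau> j. x u))"
    by (intro sum.cong refl) (simp add: cell_def sum_distrib_left mult.commute)
  finally show ?thesis .
qed

lemma adj_apply_bulk_space:
  assumes "simple_graph V E" and "S_regular V E k S \<tau>" and "x \<in> bulk_space V k \<tau>"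
  shows "adj_apply V E x \<in> bulk_space V k \<tau>"
  using assms(3)
  by (simp add: bulk_space_def adj_apply_outside[OF assms(1)] sum_cell_adj_apply[OF assms(1,2)])

lemma symmetric_invariant_subspace_bulk_space:
  assumes "simple_graph V E" and "S_regular V E k S \<tau>"
  shows "symmetric_invariant_subspace V (adj_apply V E) (bulk_space V k \<tau>)"
proof
  show "finite V" using assms(1) by (simp add: simple_graph_def)
  show "closed (bulk_space V k \<tau>)" by (rule closed_bulk_space)
  show "x v = 0" if "x \<in> bulk_space V k \<tau>" "v \<notin> V" for x v
    using that by (simp add: bulk_space_def)
  show "(\<lambda>v. x v + c * y v) \<in> bulk_space V k \<tau>"
    if "x \<in> bulk_space V k \<tau>" "y \<in> bulk_space V k \<tau>" for x y c
    using that by (simp add: bulk_space_def sum.distrib sum_distrib_left[symmetric])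
  show "adj_apply V E x \<in> bulk_space V k \<tau>" if "x \<in> bulk_space V k \<tau>" for x
    using assms that by (rule adj_apply_bulk_space)
qed (simp_all add: adj_apply_add_scaled continuous_on_adj_apply inner_on_adj_apply_commute assms(1))

lemma norm_adj_apply_le_lambda_B:
  assumes "simple_graph V E" and "S_regular V E k S \<tau>" and x: "x \<in> bulk_space V k \<tau>"
  shows "inner_on V (adj_apply V E x) (adj_apply V E x) \<le> (lambda_B V E k \<tau>)\<^sup>2 * inner_on V x x"
proof -
  interpret symmetric_invariant_subspace V "adj_apply V E" "bulk_space V k \<tau>"
    using assms(1,2) by (rule symmetric_invariant_subspace_bulk_space)
  have "bulk_eigenvalue V E k \<tau> \<mu> \<longleftrightarrow> \<mu> \<in> eigenvalues" for \<mu>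
  proof -
    have "bulk_eigenvalue V E k \<tau> \<mu> \<longleftrightarrow>
        (\<exists>y\<in>bulk_space V k \<tau>. (\<exists>v\<in>V. y v \<noteq> 0) \<and> (\<forall>v\<in>V. adj_apply V E y v = \<mu> * y v))"
      unfolding bulk_eigenvalue_def bulk_space_def by blast
    also have "\<dots> \<longleftrightarrow> (\<exists>y\<in>bulk_space V k \<tau>. y \<noteq> 0 \<and> adj_apply V E y = (\<lambda>v. \<mu> * y v))"
    proof (intro bex_cong refl)
      fix y assume "y \<in> bulk_space V k \<tau>"
      then have "\<forall>v. v \<notin> V \<longrightarrow> y v = 0 \<and> adj_apply V E y v = 0"
        using U_supported adj_apply_outside[OF assms(1)] by blast
      then show "(\<exists>v\<in>V. y v \<noteq> 0) \<and> (\<forall>v\<in>V. adj_apply V E y v = \<mu> * y v) \<longleftrightarrow>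
          y \<noteq> 0 \<and> adj_apply V E y = (\<lambda>v. \<mu> * y v)"
        unfolding fun_eq_iff by (metis mult_zero_right zero_fun_def)
    qed
    finally show ?thesis unfolding eigenvalues_def by simp
  qed
  then have "{\<bar>\<mu>\<bar> | \<mu>. bulk_eigenvalue V E k \<tau> \<mu>} = abs ` eigenvalues"
    by blast
  then have "lambda_B V E k \<tau> = Max (abs ` eigenvalues)"
    unfolding lambda_B_def by simp
  then show ?thesis
    using norm_le_max_eigenvalue[OF x] by simp
qed

(* For C = V_i these are b_i and the test vector 1_{B_i} - b_i 1_{V_i} *)
definition density :: "'v set \<Rightarrow> 'v set \<Rightarrow> real" where
  "density B C = real (card (B \<inter> C)) / real (card C)"

definition deviation :: "'v set \<Rightarrow> 'v set \<Rightarrow> 'v \<Rightarrow> real" where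
  "deviation B C v = indicator (B \<inter> C) v - density B C * indicator C v"

lemma deviation_outside: "v \<notin> C \<Longrightarrow> deviation B C v = 0"
  by (simp add: deviation_def)

lemma sum_deviation: "(\<Sum>v\<in>C. deviation B C v) = 0"
proof (cases "finite C \<and> C \<noteq> {}")
  case True
  have "C \<inter> B = B \<inter> C" by blast
  with True have "(\<Sum>v\<in>C. deviation B C v) = real (card (B \<inter> C)) - density B C * real (card C)"
    by (simp add: deviation_def sum_subtractf sum_distrib_left[symmetric] indicator_def)
  then show ?thesis
    using True by (simp add: density_def)
qed auto

lemma inner_on_deviation:
  assumes "finite V" and "C \<subseteq> V"
  shows "inner_on V (deviation B C) (deviation B C) = density B C * (1 - density B C) * real (card C)"
proof -
  let ?b = "density B C"
  have "finite C" using assms finite_subset by blast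
  have "inner_on V (deviation B C) (deviation B C) = (\<Sum>v\<in>C. if v \<in> B then (1 - ?b)\<^sup>2 else ?b\<^sup>2)"
    unfolding inner_on_def
    by (subst sum.mono_neutral_right[OF _ assms(2)])
       (auto simp: deviation_def power2_eq_square assms intro!: sum.cong)
  also have "\<dots> = real (card (B \<inter> C)) * (1 - ?b)\<^sup>2 + real (card (C - B)) * ?b\<^sup>2"
    using \<open>finite C\<close> by (simp add: sum.If_cases Int_commute Diff_eq)
  also have "real (card (C - B)) = real (card C) - real (card (B \<inter> C))"
    using \<open>finite C\<close> by (simp add: card_Diff_subset_Int Int_commute of_nat_diff card_mono)
  also have "real (card (B \<inter> C)) = ?b * real (card C)"
    using \<open>finite C\<close> by (cases "C = {}") (simp_all add: density_def)
  finally show ?thesis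
    by (simp add: algebra_simps power2_eq_square)
qed

lemma adj_apply_deviation:
  assumes "simple_graph V E" and "C \<subseteq> V"
  shows "adj_apply V E (deviation B C) v
    = real (card {u \<in> B \<inter> C. E v u}) - density B C * real (card {u \<in> C. E v u})"
proof -
  have "finite V" using assms(1) by (simp add: simple_graph_def)
  have "adj_apply V E (deviation B C) v
      = (\<Sum>u\<in>V. indicator {u \<in> B \<inter> C. E v u} u - density B C * indicator {u \<in> C. E v u} u)"
    unfolding adj_apply_def deviation_def by (intro sum.cong refl) (simp add: indicator_def)
  also have "\<dots> = real (card (V \<inter> {u \<in> B \<inter> C. E v u})) - density B C * real (card (V \<inter> {u \<in> C. E v u}))"
    using \<open>finite V\<close> by (simp add: sum_subtractf sum_distrib_left[symmetric] indicator_def)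
  also have "V \<inter> {u \<in> B \<inter> C. E v u} = {u \<in> B \<inter> C. E v u}"
    using assms(2) by auto
  also have "V \<inter> {u \<in> C. E v u} = {u \<in> C. E v u}"
    using assms(2) by auto
  finally show ?thesis .
qed

lemma deviation_cell_bulk_space:
  assumes "i < k"
  shows "deviation B (cell V \<tau> i) \<in> bulk_space V k \<tau>"
proof -
  have "(\<Sum>v\<in>cell V \<tau> j. deviation B (cell V \<tau> i) v) = 0" for j
  proof (cases "j = i")
    case False
    then show ?thesis by (simp add: deviation_outside cell_def)
  qed (simp add: sum_deviation)
  then show ?thesis
    by (simp add: bulk_space_def deviation_outside cell_def)
qed

theorem mainTheorem8:
  fixes V :: "'v set" and E :: "'v \<Rightarrow> 'v \<Rightarrow> bool" and k :: nat
    and S :: "nat \<Rightarrow> nat \<Rightarrow> nat" and \<tau> :: "'v \<Rightarrow> nat" and B :: "'v set"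
  assumes "simple_graph V E"
    and "connected_graph V E"
    and "S_regular V E k S \<tau>"
    and "card V > k"
    and "B \<subseteq> V"
  shows "(\<Sum>v\<in>V. \<Sum>i<k.
            (real (card {u \<in> B \<inter> cell V \<tau> i. E v u})
             - (real (card (B \<inter> cell V \<tau> i)) / real (card (cell V \<tau> i))) * real (S (\<tau> v) i))\<^sup>2)
         \<le> (lambda_B V E k \<tau>)\<^sup>2 *
            (\<Sum>i<k. (real (card (B \<inter> cell V \<tau> i)) / real (card (cell V \<tau> i)))
                   * (1 - real (card (B \<inter> cell V \<tau> i)) / real (card (cell V \<tau> i)))
                   * real (card (cell V \<tau> i)))"
proof -
  let ?C = "cell V \<tau>" and ?L = "lambda_B V E k \<tau>"
  let ?x = "\<lambda>i. deviation B (?C i)"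
  have "finite V" using assms(1) by (simp add: simple_graph_def)
  have cell_subset: "?C i \<subseteq> V" for i by (auto simp: cell_def)
  have "(\<Sum>v\<in>V. \<Sum>i<k. (real (card {u \<in> B \<inter> ?C i. E v u})
           - (real (card (B \<inter> ?C i)) / real (card (?C i))) * real (S (\<tau> v) i))\<^sup>2)
      = (\<Sum>v\<in>V. \<Sum>i<k. (adj_apply V E (?x i) v)\<^sup>2)"
    using assms(3)
    by (intro sum.cong refl) (simp add: adj_apply_deviation[OF assms(1) cell_subset] S_regular_def density_def)
  also have "\<dots> = (\<Sum>i<k. inner_on V (adj_apply V E (?x i)) (adj_apply V E (?x i)))"
    unfolding inner_on_def power2_eq_square by (rule sum.swap)
  also have "\<dots> \<le> (\<Sum>i<k. ?L\<^sup>2 * inner_on V (?x i) (?x i))"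
    by (intro sum_mono norm_adj_apply_le_lambda_B[OF assms(1,3)] deviation_cell_bulk_space) simp
  also have "\<dots> = ?L\<^sup>2 * (\<Sum>i<k. density B (?C i) * (1 - density B (?C i)) * real (card (?C i)))"
    by (simp add: inner_on_deviation[OF \<open>finite V\<close> cell_subset] sum_distrib_left)
  finally show ?thesis by (simp add: density_def)
qed

end
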